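(* For every base $b\ge 2$ there exist infinitely many $b$-wARH numbers, and infinitely many distinct integers $A\ge 0$ that occur as additive extra terms of some $b$-wARH number.
   Context: Fix a base $b\ge 2$. $s_b(N)$ is the sum of the base-$b$ digits of $N$. For a positive integer $X$, its reversal $X^R$ is the integer whose base-$b$ representation is that of $X$ written in reverse order (leading zeros of the result are dropped). A positive integer $N$ is a $b$-wARH number if there exists an integer $A\ge 0$, called an additive extra term of $N$, such that $N=(A+s_b(N))+(A+s_b(N))^R$. *)

theory Defs
  imports Main
begin

fun digits :: "nat \<Rightarrow> nat \<Rightarrow> nat list" where
  "digits b n = (if b < 2 \<or> n = 0 then [] else n mod b # digits b (n div b))"

declare digits.simps[simp del]

fun from_digits :: "nat \<Rightarrow> nat list \<Rightarrow> nat" where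
  "from_digits b [] = 0"
| "from_digits b (d # ds) = d + b * from_digits b ds"

definition digit_sum :: "nat \<Rightarrow> nat \<Rightarrow> nat" where
  "digit_sum b n = sum_list (digits b n)"

(* reversal: read the digits in reverse order; leading zeros automatically dropped *)
definition rev_num :: "nat \<Rightarrow> nat \<Rightarrow> nat" where
  "rev_num b n = from_digits b (rev (digits b n))"

definition is_extra_term :: "nat \<Rightarrow> nat \<Rightarrow> nat \<Rightarrow> bool" where
  "is_extra_term b N A \<longleftrightarrow>
     N = (A + digit_sum b N) + rev_num b (A + digit_sum b N)"

definition wARH :: "nat \<Rightarrow> nat \<Rightarrow> bool" where
  "wARH b N \<longleftrightarrow> N > 0 \<and> (\<exists>A. is_extra_term b N A)"

end

theory Submission
  imports Defs
begin

text \<open>For \<open>N = b\<^sup>k\<^sup>+\<^sup>1 + 1\<close> the digit sum is 2, so \<open>A = b\<^sup>k\<^sup>+\<^sup>1 - 2\<close> gives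
  \<open>A + s_b(N) = b\<^sup>k\<^sup>+\<^sup>1\<close>, whose reversal is 1; hence \<open>N = b\<^sup>k\<^sup>+\<^sup>1 + 1\<close> is a
  \<open>b\<close>-wARH number with extra term \<open>A\<close>. Both families grow strictly with \<open>k\<close>.\<close>

lemma digits_mult_base_add:
  assumes "b \<ge> 2" and "d < b" and "0 < b * m + d"
  shows "digits b (b * m + d) = d # digits b m"
  using assms by (subst digits.simps) simp

lemma digits_power:
  assumes "b \<ge> 2"
  shows "digits b (b ^ k) = replicate k 0 @ [1]"
proof (induction k)
  case 0
  then show ?case using assms by (simp add: digits.simps)
next
  case (Suc k)
  have "digits b (b * b ^ k + 0) = 0 # digits b (b ^ k)"
    using assms by (intro digits_mult_base_add) auto
  then show ?case using Suc by simp
qed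

lemma from_digits_replicate_zero:
  "from_digits b (replicate k 0 @ ds) = b ^ k * from_digits b ds"
  by (induction k) auto

lemma rev_num_power:
  assumes "b \<ge> 2"
  shows "rev_num b (b ^ k) = 1"
  using assms from_digits_replicate_zero[of b k "[]"]
  by (simp add: rev_num_def digits_power)

lemma digit_sum_power_add_one:
  assumes "b \<ge> 2"
  shows "digit_sum b (b ^ Suc k + 1) = 2"
proof -
  have "digits b (b * b ^ k + 1) = 1 # digits b (b ^ k)"
    using assms by (intro digits_mult_base_add) auto
  then show ?thesis using assms by (simp add: digit_sum_def digits_power)
qed

lemma two_le_power_Suc:
  assumes "b \<ge> (2::nat)"
  shows "2 \<le> b ^ Suc k"
  using assms power_increasing[of 1 "Suc k" b] by (simp del: power_Suc)

lemma wARH_power_add_one: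
  assumes "b \<ge> 2"
  shows "wARH b (b ^ Suc k + 1) \<and> is_extra_term b (b ^ Suc k + 1) (b ^ Suc k - 2)"
proof -
  have "b ^ Suc k - 2 + digit_sum b (b ^ Suc k + 1) = b ^ Suc k"
    using digit_sum_power_add_one[OF assms, of k] two_le_power_Suc[OF assms, of k] by linarith
  then have "is_extra_term b (b ^ Suc k + 1) (b ^ Suc k - 2)"
    unfolding is_extra_term_def using rev_num_power[OF assms, of "Suc k"] by simp
  then show ?thesis by (auto simp: wARH_def)
qed

lemma infinite_if_strict_mono_range_subset:
  fixes f :: "nat \<Rightarrow> nat"
  assumes "strict_mono f" and "range f \<subseteq> S"
  shows "infinite S"
  using assms finite_imageD[of f UNIV] strict_mono_imp_inj_on finite_subset by blast

theorem proposition11: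
  fixes b :: nat
  assumes "b \<ge> 2"
  shows "infinite {N. wARH b N} \<and>
         infinite {A. \<exists>N. wARH b N \<and> is_extra_term b N A}"
proof
  have mono_power: "b ^ Suc k < b ^ Suc l" if "k < l" for k l
    using assms that by (simp add: power_strict_increasing)
  have "strict_mono (\<lambda>k. b ^ Suc k + 1)"
    using mono_power by (intro strict_monoI) simp
  moreover have "range (\<lambda>k. b ^ Suc k + 1) \<subseteq> {N. wARH b N}"
    using wARH_power_add_one[OF assms] by auto
  ultimately show "infinite {N. wARH b N}"
    by (rule infinite_if_strict_mono_range_subset)
  have "strict_mono (\<lambda>k. b ^ Suc k - 2)"
    using mono_power two_le_power_Suc[OF assms]
    by (intro strict_monoI) (simp add: diff_less_mono)
  moreover have "range (\<lambda>k. b ^ Suc k - 2) \<subseteq> {A. \<exists>N. wARH b N \<and> is_extra_term b N A}"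
    using wARH_power_add_one[OF assms] by blast
  ultimately show "infinite {A. \<exists>N. wARH b N \<and> is_extra_term b N A}"
    by (rule infinite_if_strict_mono_range_subset)
qed

end
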